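(* Under the standing assumptions below, suppose there exists $m\in M$ such that $\phi\left(\left[\begin{smallmatrix} 1 & m\\ 0 & 0\end{smallmatrix}\right]\right)$ is a type 1 idempotent of $T'$. Then (a) $\phi$ maps every idempotent of the form $\left[\begin{smallmatrix} 1 & m\\ 0 & 0\end{smallmatrix}\right]$ ($m\in M$) to a type 1 idempotent; and (b) there exist a fixed element $b'_1\in N'$ and a map $u_1:M\to M'$ such that $\phi\left(\left[\begin{smallmatrix} 1 & m\\ 0 & 0\end{smallmatrix}\right]\right)=\left[\begin{smallmatrix} 1 & u_1(m)\\ b'_1 & 0\end{smallmatrix}\right]$ for all $m\in M$.
   Context: All rings have an identity $1\neq 0$. Standing assumptions: $R,S,R',S'$ are rings whose only idempotents are $0$ and $1$; $M$ is an $R$-$S$-bimodule, $N$ an $S$-$R$-bimodule, $M'$ an $R'$-$S'$-bimodule, $N'$ an $S'$-$R'$-bimodule; $T=\left[\begin{smallmatrix} R & M\\ N & S\end{smallmatrix}\right]$ and $T'=\left[\begin{smallmatrix} R' & M'\\ N' & S'\end{smallmatrix}\right]$ are the Morita context rings with both Morita maps zero, i.e. the sets of formal matrices with entrywise addition and product $\left[\begin{smallmatrix} r & m\\ n & s\end{smallmatrix}\right]\left[\begin{smallmatrix} r' & m'\\ n' & s'\end{smallmatrix}\right]=\left[\begin{smallmatrix} rr' & rm'+ms'\\ nr'+sn' & ss'\end{smallmatrix}\right]$; and $\phi:T\to T'$ is a ring isomorphism. Under these assumptions every idempotent of $T$ (or $T'$) other than $0$ and $1$ has one of the forms $\left[\begin{smallmatrix}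 1 & m\\ n & 0\end{smallmatrix}\right]$ (called a type 1 idempotent) or $\left[\begin{smallmatrix} 0 & m\\ n & 1\end{smallmatrix}\right]$ (called a type 2 idempotent). *)

theory Defs
  imports Main
begin

definition only_trivial_idempotents :: "'r::ring_1 itself \<Rightarrow> bool" where
  "only_trivial_idempotents _ \<longleftrightarrow> (\<forall>x::'r. x * x = x \<longrightarrow> x = 0 \<or> x = 1)"

definition bimodule ::
  "('r::ring_1 \<Rightarrow> 'm::ab_group_add \<Rightarrow> 'm) \<Rightarrow> ('m \<Rightarrow> 's::ring_1 \<Rightarrow> 'm) \<Rightarrow> bool" where
  "bimodule la ra \<longleftrightarrow>
     (\<forall>r m m'. la r (m + m') = la r m + la r m') \<and>
     (\<forall>r r' m. la (r + r') m = la r m + la r' m) \<and>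
     (\<forall>r r' m. la (r * r') m = la r (la r' m)) \<and>
     (\<forall>m. la 1 m = m) \<and>
     (\<forall>s m m'. ra (m + m') s = ra m s + ra m' s) \<and>
     (\<forall>s s' m. ra m (s + s') = ra m s + ra m s') \<and>
     (\<forall>s s' m. ra m (s * s') = ra (ra m s) s') \<and>
     (\<forall>m. ra m 1 = m) \<and>
     (\<forall>r m s. ra (la r m) s = la r (ra m s))"

text \<open>Formal 2x2 matrices [[r, m],[n, s]].\<close>
datatype ('r, 'm, 'n, 's) mc = MC 'r 'm 'n 's

text \<open>Operations of the Morita context ring with both Morita maps zero.
  lm, rm: left/right actions on M; ln, rn: left/right actions on N.\<close>
fun mc_add :: "('r::ring_1, 'm::ab_group_add, 'n::ab_group_add, 's::ring_1) mc \<Rightarrow> ('r, 'm, 'n, 's) mc \<Rightarrow> ('r, 'm, 'n, 's) mc" where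
  "mc_add (MC r m n s) (MC r' m' n' s') = MC (r + r') (m + m') (n + n') (s + s')"

fun mc_mult ::
  "('r::ring_1 \<Rightarrow> 'm::ab_group_add \<Rightarrow> 'm) \<Rightarrow> ('m \<Rightarrow> 's::ring_1 \<Rightarrow> 'm) \<Rightarrow>
   ('s \<Rightarrow> 'n::ab_group_add \<Rightarrow> 'n) \<Rightarrow> ('n \<Rightarrow> 'r \<Rightarrow> 'n) \<Rightarrow>
   ('r, 'm, 'n, 's) mc \<Rightarrow> ('r, 'm, 'n, 's) mc \<Rightarrow> ('r, 'm, 'n, 's) mc" where
  "mc_mult lm rm ln rn (MC r m n s) (MC r' m' n' s') =
     MC (r * r') (lm r m' + rm m s') (rn n r' + ln s n') (s * s')"

definition mc_one :: "('r::ring_1, 'm::ab_group_add, 'n::ab_group_add, 's::ring_1) mc" where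
  "mc_one = MC 1 0 0 1"

definition mc_ring_iso ::
  "('r::ring_1 \<Rightarrow> 'm::ab_group_add \<Rightarrow> 'm) \<Rightarrow> ('m \<Rightarrow> 's::ring_1 \<Rightarrow> 'm) \<Rightarrow>
   ('s \<Rightarrow> 'n::ab_group_add \<Rightarrow> 'n) \<Rightarrow> ('n \<Rightarrow> 'r \<Rightarrow> 'n) \<Rightarrow>
   ('r2::ring_1 \<Rightarrow> 'm2::ab_group_add \<Rightarrow> 'm2) \<Rightarrow> ('m2 \<Rightarrow> 's2::ring_1 \<Rightarrow> 'm2) \<Rightarrow>
   ('s2 \<Rightarrow> 'n2::ab_group_add \<Rightarrow> 'n2) \<Rightarrow> ('n2 \<Rightarrow> 'r2 \<Rightarrow> 'n2) \<Rightarrow>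
   (('r, 'm, 'n, 's) mc \<Rightarrow> ('r2, 'm2, 'n2, 's2) mc) \<Rightarrow> bool" where
  "mc_ring_iso lm rm ln rn lm' rm' ln' rn' \<phi> \<longleftrightarrow>
     bij \<phi> \<and>
     (\<forall>x y. \<phi> (mc_add x y) = mc_add (\<phi> x) (\<phi> y)) \<and>
     (\<forall>x y. \<phi> (mc_mult lm rm ln rn x y) = mc_mult lm' rm' ln' rn' (\<phi> x) (\<phi> y)) \<and>
     \<phi> mc_one = mc_one"

definition mc_idempotent ::
  "('r::ring_1 \<Rightarrow> 'm::ab_group_add \<Rightarrow> 'm) \<Rightarrow> ('m \<Rightarrow> 's::ring_1 \<Rightarrow> 'm) \<Rightarrow>
   ('s \<Rightarrow> 'n::ab_group_add \<Rightarrow> 'n) \<Rightarrow> ('n \<Rightarrow> 'r \<Rightarrow> 'n) \<Rightarrow> ('r, 'm, 'n, 's) mc \<Rightarrow> bool" where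
  "mc_idempotent lm rm ln rn e \<longleftrightarrow> mc_mult lm rm ln rn e e = e"

definition type1_idempotent ::
  "('r::ring_1 \<Rightarrow> 'm::ab_group_add \<Rightarrow> 'm) \<Rightarrow> ('m \<Rightarrow> 's::ring_1 \<Rightarrow> 'm) \<Rightarrow>
   ('s \<Rightarrow> 'n::ab_group_add \<Rightarrow> 'n) \<Rightarrow> ('n \<Rightarrow> 'r \<Rightarrow> 'n) \<Rightarrow> ('r, 'm, 'n, 's) mc \<Rightarrow> bool" where
  "type1_idempotent lm rm ln rn e \<longleftrightarrow>
     mc_idempotent lm rm ln rn e \<and> (\<exists>m n. e = MC 1 m n 0)"

end

theory Submission
  imports Defs
begin

(*
  Write E m for the idempotent [[1, m], [0, 0]] of T.  The proof rests on one identity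
  valid in every Morita context ring with zero Morita maps:
      [[1, x], [y, 0]] * [[1, x'], [y', 0]] = [[1, x'], [y, 0]].
  In T it gives E p * E q = E q.  Applying phi, phi(E m) = phi(E m0) * phi(E m), and
  left multiplication by the type 1 idempotent phi(E m0) kills the S'-entry, so
  phi(E m) has the shape [[a, x], [y, 0]].  Since E m = E m * E m and phi is
  injective, phi(E m) is a nonzero idempotent; a matrix [[0, x], [y, 0]] squares to zero,
  so a is a nonzero idempotent of R', i.e. a = 1: this is part (a).  For part (b),
  phi(E 0) = phi(E m) * phi(E 0), and the identity above shows that this product carries
  the N'-entry of phi(E m), so all these N'-entries agree with that of phi(E 0).
*)

lemma bimodule_simps:
  fixes la :: "'r::ring_1 \<Rightarrow> 'm::ab_group_add \<Rightarrow> 'm" and ra :: "'m \<Rightarrow> 's::ring_1 \<Rightarrow> 'm"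
  assumes "bimodule la ra"
  shows "la 1 m = m" "ra m 1 = m" "la 0 m = 0" "ra m 0 = 0" "la r 0 = 0" "ra 0 s = 0"
proof -
  show "la 1 m = m" "ra m 1 = m" using assms unfolding bimodule_def by auto
  have "la (0 + 0) m = la 0 m + la 0 m" using assms unfolding bimodule_def by blast
  thus "la 0 m = 0" by simp
  have "ra m (0 + 0) = ra m 0 + ra m 0" using assms unfolding bimodule_def by blast
  thus "ra m 0 = 0" by simp
  have "la r (0 + 0) = la r 0 + la r 0" using assms unfolding bimodule_def by metis
  thus "la r 0 = 0" by simp
  have "ra (0 + 0) s = ra 0 s + ra 0 s" using assms unfolding bimodule_def by metis
  thus "ra 0 s = 0" by simp
qed

lemma mc_mult_type1_shape:
  assumes "bimodule lm rm" and "bimodule ln rn"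
  shows "mc_mult lm rm ln rn (MC 1 x y 0) (MC 1 x' y' 0) = MC 1 x' y 0"
  using bimodule_simps[OF assms(1)] bimodule_simps[OF assms(2)] by simp

lemma mc_mult_zero_diagonal:
  assumes "bimodule lm rm" and "bimodule ln rn"
  shows "mc_mult lm rm ln rn (MC 0 x y 0) (MC 0 x y 0) = MC 0 0 0 0"
  using bimodule_simps[OF assms(1)] bimodule_simps[OF assms(2)] by simp

lemma mc_fixed_by_type1_shape:
  assumes "mc_mult lm rm ln rn (MC 1 x y 0) g = g"
  obtains a x' y' where "g = MC a x' y' 0"
proof (cases g)
  case (MC a x' y' b)
  with assms have "b = 0" by simp
  with MC show thesis using that by blast
qed

text \<open>If R has only trivial idempotents, every nonzero idempotent with zero S-entry is
  of type 1: its R-entry is idempotent, and it cannot be 0 by the previous squaring.\<close>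
lemma nonzero_idempotent_is_type1:
  fixes lm :: "'r::ring_1 \<Rightarrow> 'm::ab_group_add \<Rightarrow> 'm"
  assumes "only_trivial_idempotents TYPE('r)"
    and "bimodule lm rm" and "bimodule ln rn"
    and idem: "mc_idempotent lm rm ln rn (MC a x y 0)"
    and nonzero: "MC a x y 0 \<noteq> MC 0 0 0 0"
  shows "type1_idempotent lm rm ln rn (MC a x y 0)"
proof -
  from idem have "a * a = a" unfolding mc_idempotent_def by simp
  hence "a = 0 \<or> a = 1" using assms(1) unfolding only_trivial_idempotents_def by blast
  moreover have "a \<noteq> 0"
  proof
    assume "a = 0"
    with idem mc_mult_zero_diagonal[OF assms(2,3)] have "MC a x y 0 = MC 0 0 0 0"
      unfolding mc_idempotent_def by simp
    with nonzero show False ..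
  qed
  ultimately have "a = 1" by blast
  with idem show ?thesis unfolding type1_idempotent_def by blast
qed

lemma mc_ring_iso_zero:
  assumes "mc_ring_iso lm rm ln rn lm' rm' ln' rn' \<phi>"
  shows "\<phi> (MC 0 0 0 0) = MC 0 0 0 0"
proof (cases "\<phi> (MC 0 0 0 0)")
  case (MC a b c d)
  have "\<phi> (mc_add (MC 0 0 0 0) (MC 0 0 0 0)) = mc_add (\<phi> (MC 0 0 0 0)) (\<phi> (MC 0 0 0 0))"
    using assms unfolding mc_ring_iso_def by blast
  with MC have "MC a b c d = MC (a + a) (b + b) (c + c) (d + d)" by simp
  with MC show ?thesis by simp
qed

lemma mc_ring_iso_nonzero:
  assumes "mc_ring_iso lm rm ln rn lm' rm' ln' rn' \<phi>" and "e \<noteq> MC 0 0 0 0"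
  shows "\<phi> e \<noteq> MC 0 0 0 0"
proof -
  have "inj \<phi>" using assms(1) unfolding mc_ring_iso_def bij_def by blast
  with assms show ?thesis by (metis mc_ring_iso_zero injD)
qed

lemma mc_ring_iso_mult:
  assumes "mc_ring_iso lm rm ln rn lm' rm' ln' rn' \<phi>"
  shows "\<phi> (mc_mult lm rm ln rn e f) = mc_mult lm' rm' ln' rn' (\<phi> e) (\<phi> f)"
  using assms unfolding mc_ring_iso_def by blast

lemma mc_ring_iso_corner_absorb:
  assumes "bimodule lm rm" and "bimodule ln rn"
    and "mc_ring_iso lm rm ln rn lm' rm' ln' rn' \<phi>"
  shows "mc_mult lm' rm' ln' rn' (\<phi> (MC 1 p 0 0)) (\<phi> (MC 1 q 0 0)) = \<phi> (MC 1 q 0 0)"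
  using mc_ring_iso_mult[OF assms(3)] mc_mult_type1_shape[OF assms(1,2), of p 0 q 0] by metis

text \<open>Part (a): once one corner idempotent E m0 is mapped to a type 1 idempotent, all are.
  Absorption by phi(E m0) kills the S'-entry of phi(E m), and phi(E m) is a nonzero
  idempotent.\<close>
lemma corner_images_type1:
  fixes \<phi> :: "('r::ring_1, 'm::ab_group_add, 'n::ab_group_add, 's::ring_1) mc \<Rightarrow>
                ('r2::ring_1, 'm2::ab_group_add, 'n2::ab_group_add, 's2::ring_1) mc"
  assumes "only_trivial_idempotents TYPE('r2)"
    and "bimodule lm rm" and "bimodule ln rn" and "bimodule lm' rm'" and "bimodule ln' rn'"
    and iso: "mc_ring_iso lm rm ln rn lm' rm' ln' rn' \<phi>"
    and "type1_idempotent lm' rm' ln' rn' (\<phi> (MC 1 m0 0 0))"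
  shows "type1_idempotent lm' rm' ln' rn' (\<phi> (MC 1 m 0 0))"
proof -
  note absorb = mc_ring_iso_corner_absorb[OF assms(2,3) iso]
  obtain x0 y0 where "\<phi> (MC 1 m0 0 0) = MC 1 x0 y0 0"
    using assms(7) unfolding type1_idempotent_def by blast
  then have "mc_mult lm' rm' ln' rn' (MC 1 x0 y0 0) (\<phi> (MC 1 m 0 0)) = \<phi> (MC 1 m 0 0)"
    using absorb[where p = m0 and q = m] by simp
  then obtain a x y where shape: "\<phi> (MC 1 m 0 0) = MC a x y 0"
    by (rule mc_fixed_by_type1_shape)
  have "mc_idempotent lm' rm' ln' rn' (\<phi> (MC 1 m 0 0))"
    using absorb[where p = m and q = m] unfolding mc_idempotent_def .
  moreover have "\<phi> (MC 1 m 0 0) \<noteq> MC 0 0 0 0" by (rule mc_ring_iso_nonzero[OF iso]) simp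
  ultimately show ?thesis using nonzero_idempotent_is_type1[OF assms(1,4,5)] shape by simp
qed

text \<open>Part (b): if all corner idempotents go to type 1 idempotents, their images share
  one N'-entry, because phi(E 0) = phi(E m) * phi(E 0) carries the N'-entry of phi(E m).\<close>
lemma corner_images_common_N_entry:
  assumes "bimodule lm rm" and "bimodule ln rn" and "bimodule lm' rm'" and "bimodule ln' rn'"
    and iso: "mc_ring_iso lm rm ln rn lm' rm' ln' rn' \<phi>"
    and type1: "\<forall>m. type1_idempotent lm' rm' ln' rn' (\<phi> (MC 1 m 0 0))"
  shows "\<exists>b1 u1. \<forall>m. \<phi> (MC 1 m 0 0) = MC 1 (u1 m) b1 0"
proof -
  have entries_exist: "\<forall>m. \<exists>x y. \<phi> (MC 1 m 0 0) = MC 1 x y 0"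
    using type1 unfolding type1_idempotent_def by blast
  obtain u1 where N_entries_exist: "\<forall>m. \<exists>y. \<phi> (MC 1 m 0 0) = MC 1 (u1 m) y 0"
    using choice[OF entries_exist] by blast
  obtain b where entries: "\<phi> (MC 1 m 0 0) = MC 1 (u1 m) (b m) 0" for m
    using choice[OF N_entries_exist] by blast
  have "b m = b 0" for m
  proof -
    have "mc_mult lm' rm' ln' rn' (MC 1 (u1 m) (b m) 0) (MC 1 (u1 0) (b 0) 0) = MC 1 (u1 0) (b 0) 0"
      using mc_ring_iso_corner_absorb[OF assms(1,2) iso, where p = m and q = 0]
      unfolding entries .
    then show ?thesis using mc_mult_type1_shape[OF assms(3,4)] by simp
  qed
  then have "\<forall>m. \<phi> (MC 1 m 0 0) = MC 1 (u1 m) (b 0) 0" using entries by simp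
  then show ?thesis by blast
qed

theorem corollary4p2:
  fixes lm :: "'r::ring_1 \<Rightarrow> 'm::ab_group_add \<Rightarrow> 'm" and rm :: "'m \<Rightarrow> 's::ring_1 \<Rightarrow> 'm"
    and ln :: "'s \<Rightarrow> 'n::ab_group_add \<Rightarrow> 'n" and rn :: "'n \<Rightarrow> 'r \<Rightarrow> 'n"
    and lm' :: "'r2::ring_1 \<Rightarrow> 'm2::ab_group_add \<Rightarrow> 'm2" and rm' :: "'m2 \<Rightarrow> 's2::ring_1 \<Rightarrow> 'm2"
    and ln' :: "'s2 \<Rightarrow> 'n2::ab_group_add \<Rightarrow> 'n2" and rn' :: "'n2 \<Rightarrow> 'r2 \<Rightarrow> 'n2"
    and \<phi> :: "('r, 'm, 'n, 's) mc \<Rightarrow> ('r2, 'm2, 'n2, 's2) mc"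
  assumes "only_trivial_idempotents TYPE('r)" and "only_trivial_idempotents TYPE('s)"
    and "only_trivial_idempotents TYPE('r2)" and "only_trivial_idempotents TYPE('s2)"
    and "bimodule lm rm" and "bimodule ln rn" and "bimodule lm' rm'" and "bimodule ln' rn'"
    and "mc_ring_iso lm rm ln rn lm' rm' ln' rn' \<phi>"
    and "\<exists>m. type1_idempotent lm' rm' ln' rn' (\<phi> (MC 1 m 0 0))"
  shows "(\<forall>m. type1_idempotent lm' rm' ln' rn' (\<phi> (MC 1 m 0 0))) \<and>
         (\<exists>b1 :: 'n2. \<exists>u1 :: 'm \<Rightarrow> 'm2. \<forall>m. \<phi> (MC 1 m 0 0) = MC 1 (u1 m) b1 0)"
proof -
  obtain m0 where "type1_idempotent lm' rm' ln' rn' (\<phi> (MC 1 m0 0 0))"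
    using assms(10) by blast
  then have type1: "\<forall>m. type1_idempotent lm' rm' ln' rn' (\<phi> (MC 1 m 0 0))"
    using corner_images_type1[OF assms(3,5-9)] by blast
  moreover have "\<exists>b1 u1. \<forall>m. \<phi> (MC 1 m 0 0) = MC 1 (u1 m) b1 0"
    using corner_images_common_N_entry[OF assms(5-9) type1] .
  ultimately show ?thesis by blast
qed

end
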